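(* $u_2u_1u_2\subset U$.
   Context: Let $B_3=\langle s_1,s_2\mid s_1s_2s_1=s_2s_1s_2\rangle$, $R_4=\mathbb{Z}[a,b,c,d,d^{-1}]$, and let $H_4$ be the quotient of the group algebra $R_4B_3$ by the relations $s_i^4=as_i^3+bs_i^2+cs_i+d$ for $i=1,2$; identify $s_i$ with their images in $H_4$. For $i=1,2$ let $u_i$ be the $R_4$-subalgebra of $H_4$ generated by $s_i$. For $R_4$-submodules (or elements) $X_1,\dots,X_n$ of $H_4$, $X_1\cdots X_n$ denotes the $R_4$-submodule spanned by all products $x_1\cdots x_n$ with $x_j\in X_j$, and sums are sums of submodules. Define $U'=u_1u_2u_1+u_1s_2s_1^{-1}s_2u_1+u_1s_2^{-1}s_1s_2^{-1}u_1+u_1s_2^{-1}s_1^{-2}s_2^{-1}$ and $U=U'+u_1s_2s_1^{-2}s_2u_1+u_1s_2^{-2}s_1^{-2}s_2^{-2}u_1$. *)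

theory Defs
  imports Main
begin

text \<open>We work in an arbitrary ring A (type 'a) in which central elements a,b,c,d
(d invertible) and units s1,s2 satisfy the defining relations of H_4.  By the
universal property of H_4 this is equivalent to the statement in H_4 itself.
The image of R_4 = Z[a,b,c,d,d^-1] in A is the subring generated by a,b,c,d,d^-1.\<close>

inductive_set subring_gen :: "'a::ring_1 set \<Rightarrow> 'a set" for G where
  gen: "g \<in> G \<Longrightarrow> g \<in> subring_gen G"
| one: "1 \<in> subring_gen G"
| add: "x \<in> subring_gen G \<Longrightarrow> y \<in> subring_gen G \<Longrightarrow> x + y \<in> subring_gen G"
| neg: "x \<in> subring_gen G \<Longrightarrow> - x \<in> subring_gen G"
| mult: "x \<in> subring_gen G \<Longrightarrow> y \<in> subring_gen G \<Longrightarrow> x * y \<in> subring_gen G"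

text \<open>R-linear span (R acts by left multiplication; R is central).\<close>
inductive_set rspan :: "'a::ring_1 set \<Rightarrow> 'a set \<Rightarrow> 'a set" for R X where
  zero: "0 \<in> rspan R X"
| smult: "r \<in> R \<Longrightarrow> x \<in> X \<Longrightarrow> r * x \<in> rspan R X"
| add: "x \<in> rspan R X \<Longrightarrow> y \<in> rspan R X \<Longrightarrow> x + y \<in> rspan R X"

fun prods :: "'a::ring_1 set list \<Rightarrow> 'a set" where
  "prods [] = {1}"
| "prods (X # Xs) = {x * y | x y. x \<in> X \<and> y \<in> prods Xs}"

definition mprod :: "'a::ring_1 set \<Rightarrow> 'a set list \<Rightarrow> 'a set" where
  "mprod R Xs = rspan R (prods Xs)"

definition msum :: "'a::ring_1 set \<Rightarrow> 'a set \<Rightarrow> 'a set" where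
  "msum X Y = {x + y | x y. x \<in> X \<and> y \<in> Y}"

definition ualg :: "'a::ring_1 set \<Rightarrow> 'a \<Rightarrow> 'a set" where
  "ualg R s = rspan R {s ^ k | k. True}"

end

theory Submission
  imports Defs
begin

text \<open>By the quartic relation, whose constant term is invertible, \<open>u\<^sub>1\<close> is spanned by
the powers \<open>s\<^sub>1\<^sup>l\<close> for any four consecutive integers \<open>l\<close>, and the same recurrence lets
membership in a submodule propagate from four consecutive exponents to all of them, in both
directions. Hence it suffices to show \<open>s\<^sub>2\<^sup>k s\<^sub>1\<^sup>l s\<^sub>2\<^sup>m \<in> U\<close> for
\<open>l \<in> {-1, 0, 1, 2}\<close> and \<open>k, m\<close> in windows of four consecutive integers. Each of these
finitely many words is moved into one of the six summands of \<open>U\<close> by the braid relation;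
for \<open>l = 2\<close> some words are first reduced to \<open>l \<in> {1, 0, -1, -2}\<close> by the quartic relation.\<close>

text \<open>Integer powers of a unit \<open>s\<close> with two-sided inverse \<open>t\<close>; the library's \<open>power_int\<close>
requires a division ring.\<close>

definition upow :: "'a::ring_1 \<Rightarrow> 'a \<Rightarrow> int \<Rightarrow> 'a" where
  "upow s t n = (if 0 \<le> n then s ^ nat n else t ^ nat (- n))"

lemma upow_simps [simp]:
  "upow s t (int k) = s ^ k" "upow s t 0 = 1" "upow s t 1 = s" "upow s t 2 = s * s"
  "upow s t 3 = s * s * s" "upow s t (-1) = t" "upow s t (-2) = t * t" "upow s t (-3) = t * t * t"
  by (simp_all add: upow_def power2_eq_square power3_eq_cube)

context
  fixes s t :: "'a::ring_1"
  assumes inverse: "s * t = 1" "t * s = 1"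
begin

lemma upow_plus_1: "upow s t (n + 1) = upow s t n * s"
proof (cases "0 \<le> n")
  case True
  then have "nat (n + 1) = Suc (nat n)" by simp
  with True show ?thesis by (simp add: upow_def power_commutes)
next
  case False
  show ?thesis
  proof (cases "n = -1")
    case True
    then show ?thesis using inverse by (simp add: upow_def)
  next
    case n: False
    with False have "nat (- n) = Suc (nat (- (n + 1)))" by simp
    then have "t ^ nat (- n) * s = t ^ nat (- (n + 1)) * (t * s)"
      by (simp only: power_Suc2 mult.assoc)
    then have "t ^ nat (- n) * s = t ^ nat (- (n + 1))" using inverse by simp
    with False n show ?thesis by (simp add: upow_def)
  qed
qed

lemma upow_minus_1: "upow s t (n - 1) = upow s t n * t"
  using upow_plus_1[of "n - 1"] inverse by (simp add: mult.assoc)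

lemma upow_add_nat: "upow s t (m + int k) = upow s t m * s ^ k"
proof (induction k)
  case (Suc k)
  have shift: "m + int (Suc k) = m + int k + 1" by simp
  show ?case unfolding shift upow_plus_1 Suc.IH by (simp add: mult.assoc power_commutes)
qed simp

lemma upow_diff_nat: "upow s t (m - int k) = upow s t m * t ^ k"
proof (induction k)
  case (Suc k)
  have shift: "m - int (Suc k) = m - int k - 1" by simp
  show ?case unfolding shift upow_minus_1 Suc.IH by (simp add: mult.assoc power_commutes)
qed simp

lemma upow_add: "upow s t (m + n) = upow s t m * upow s t n"
proof (cases "0 \<le> n")
  case True
  then obtain k where "n = int k" by (metis nonneg_int_cases)
  then show ?thesis by (simp add: upow_add_nat)
next
  case False
  then obtain k where "n = - int k" by (metis nle_le nonpos_int_cases)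
  with False show ?thesis using upow_diff_nat[of m k] by (simp add: upow_def)
qed

end

definition rsubmodule :: "'a::ring_1 set \<Rightarrow> 'a set \<Rightarrow> bool" where
  "rsubmodule R M \<longleftrightarrow> 0 \<in> M \<and> (\<forall>r\<in>R. \<forall>z\<in>M. r * z \<in> M) \<and> (\<forall>z\<in>M. \<forall>w\<in>M. z + w \<in> M)"

lemma rsubmodule_zero: "rsubmodule R M \<Longrightarrow> 0 \<in> M"
  and rsubmodule_smult: "rsubmodule R M \<Longrightarrow> r \<in> R \<Longrightarrow> z \<in> M \<Longrightarrow> r * z \<in> M"
  and rsubmodule_add: "rsubmodule R M \<Longrightarrow> z \<in> M \<Longrightarrow> w \<in> M \<Longrightarrow> z + w \<in> M"
  by (simp_all add: rsubmodule_def)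

lemma rsubmodule_rspan:
  assumes "\<And>r r'. r \<in> R \<Longrightarrow> r' \<in> R \<Longrightarrow> r * r' \<in> R"
  shows "rsubmodule R (rspan R X)"
proof -
  have "r * z \<in> rspan R X" if "r \<in> R" "z \<in> rspan R X" for r z
    using that(2)
  proof (induction rule: rspan.induct)
    case (smult r' x)
    then show ?case using assms that(1) by (metis mult.assoc rspan.smult)
  qed (simp_all add: distrib_left rspan.intros)
  then show ?thesis by (auto simp: rsubmodule_def intro: rspan.intros)
qed

lemma mprod_subset:
  assumes "rsubmodule R M" "prods Xs \<subseteq> M"
  shows "mprod R Xs \<subseteq> M"
  unfolding mprod_def
proof
  show "z \<in> M" if "z \<in> rspan R (prods Xs)" for z
    using that by induction (use assms in \<open>auto simp: rsubmodule_def\<close>)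
qed

lemma rspan_sandwich:
  assumes M: "rsubmodule R M" and commute: "\<And>r. r \<in> R \<Longrightarrow> r * w = w * r"
    and gens: "\<And>x. x \<in> X \<Longrightarrow> w * x * z \<in> M" and p: "p \<in> rspan R X"
  shows "w * p * z \<in> M"
  using p
proof induction
  case (smult r x)
  have "w * (r * x) * z = r * (w * x * z)" using commute[OF smult(1)] by (metis mult.assoc)
  then show ?case using rsubmodule_smult[OF M smult(1) gens[OF smult(2)]] by simp
qed (use M in \<open>simp_all add: rsubmodule_def distrib_left distrib_right\<close>)

lemma rsubmodule_msum: "rsubmodule R X \<Longrightarrow> rsubmodule R Y \<Longrightarrow> rsubmodule R (msum X Y)"
  unfolding rsubmodule_def msum_def
  by (safe; metis add.right_neutral distrib_left add.assoc add.commute)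

lemma rsubmodule_lincomb4:
  assumes "rsubmodule R M" "r1 \<in> R" "r2 \<in> R" "r3 \<in> R" "r4 \<in> R"
    "z1 \<in> M" "z2 \<in> M" "z3 \<in> M" "z4 \<in> M"
  shows "r1 * z1 + r2 * z2 + r3 * z3 + r4 * z4 \<in> M"
  using assms by (intro rsubmodule_add rsubmodule_smult)

lemma recurrence_in_rsubmodule:
  fixes g :: "int \<Rightarrow> 'a::ring_1"
  assumes M: "rsubmodule R M"
    and coeffs: "a \<in> R" "b \<in> R" "c \<in> R" "d \<in> R" "di \<in> R" "-1 \<in> R" and "di * d = 1"
    and rec: "\<And>n. g (n + 4) = a * g (n + 3) + b * g (n + 2) + c * g (n + 1) + d * g n"
    and start: "g m \<in> M" "g (m + 1) \<in> M" "g (m + 2) \<in> M" "g (m + 3) \<in> M"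
  shows "g n \<in> M"
proof -
  have step_down: "g (n - 1) = di * (g (n + 3) + (-1) * (a * g (n + 2))
                + (-1) * (b * g (n + 1)) + (-1) * (c * g n))" for n
  proof -
    have "g (n + 3) = a * g (n + 2) + b * g (n + 1) + c * g n + d * g (n - 1)"
      using rec[of "n - 1"] by (simp add: algebra_simps)
    then have "d * g (n - 1) = g (n + 3) + (-1) * (a * g (n + 2))
                + (-1) * (b * g (n + 1)) + (-1) * (c * g n)"
      by (simp add: algebra_simps)
    then show ?thesis using \<open>di * d = 1\<close> by (metis mult.assoc mult_1_left)
  qed
  have neg: "(-1) * z \<in> M" if "z \<in> M" for z
    using rsubmodule_smult[OF M coeffs(6) that] .
  have up: "g (m + int j) \<in> M \<and> g (m + int j + 1) \<in> M \<and> g (m + int j + 2) \<in> M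
      \<and> g (m + int j + 3) \<in> M" for j
  proof (induction j)
    case (Suc j)
    have "g (m + int j + 4) \<in> M"
      unfolding rec using Suc coeffs by (intro rsubmodule_lincomb4[OF M]) (simp_all add: add.assoc)
    then show ?case using Suc by (simp add: algebra_simps)
  qed (use start in simp)
  have down: "g (m - int j) \<in> M \<and> g (m - int j + 1) \<in> M \<and> g (m - int j + 2) \<in> M
      \<and> g (m - int j + 3) \<in> M" for j
  proof (induction j)
    case (Suc j)
    have "g (m - int j - 1) \<in> M"
      unfolding step_down using Suc coeffs
      by (intro rsubmodule_smult[OF M] rsubmodule_add[OF M] neg rsubmodule_smult[OF M]) simp_all
    then show ?case using Suc by (simp add: algebra_simps)
  qed (use start in simp)
  show ?thesis
  proof (cases "m \<le> n")
    case True
    then show ?thesis using up[of "nat (n - m)"] by simp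
  next
    case False
    then show ?thesis using down[of "nat (m - n)"] by simp
  qed
qed

lemma mprod_Cons_lmult:
  assumes P: "\<And>p. p \<in> P \<Longrightarrow> g * p \<in> P" and commute: "\<And>r. r \<in> R \<Longrightarrow> g * r = r * g"
    and z: "z \<in> mprod R (P # L)"
  shows "g * z \<in> mprod R (P # L)"
  using z unfolding mprod_def
proof induction
  case (smult r w)
  then obtain p q where w: "w = p * q" "p \<in> P" "q \<in> prods L" by auto
  have "g * (r * w) = r * ((g * p) * q)" using commute[OF smult(1)] w by (metis mult.assoc)
  moreover have "(g * p) * q \<in> prods (P # L)" using P[OF w(2)] w(3) by auto
  ultimately show ?case using smult(1) by (simp add: rspan.smult)
qed (simp_all add: distrib_left rspan.intros)

lemma msum_lmult:
  "(\<And>z. z \<in> X \<Longrightarrow> g * z \<in> X) \<Longrightarrow> (\<And>z. z \<in> Y \<Longrightarrow> g * z \<in> Y) \<Longrightarrow>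
    z \<in> msum X Y \<Longrightarrow> g * z \<in> msum X Y"
  unfolding msum_def by (force simp: distrib_left)

lemma msum_memI1: "z \<in> X \<Longrightarrow> 0 \<in> Y \<Longrightarrow> z \<in> msum X Y"
  and msum_memI2: "z \<in> Y \<Longrightarrow> 0 \<in> X \<Longrightarrow> z \<in> msum X Y"
  unfolding msum_def by force+

lemma mprod_memI2: "1 \<in> R \<Longrightarrow> p \<in> P \<Longrightarrow> q \<in> Q \<Longrightarrow> p * q \<in> mprod R [P, Q]"
  unfolding mprod_def using rspan.smult[of 1 R "p * (q * 1)" "prods [P, Q]"] by auto

lemma mprod_memI3:
  "1 \<in> R \<Longrightarrow> p \<in> P \<Longrightarrow> q \<in> Q \<Longrightarrow> r \<in> S \<Longrightarrow> p * q * r \<in> mprod R [P, Q, S]"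
  unfolding mprod_def using rspan.smult[of 1 R "p * (q * (r * 1))" "prods [P, Q, S]"]
  by (auto simp: mult.assoc)

text \<open>\<open>x, y\<close> are the images of \<open>s\<^sub>1, s\<^sub>2\<close> and \<open>X, Y\<close> their inverses.\<close>

locale H4_rep =
  fixes a b c d di x y X Y :: "'a::ring_1"
  assumes central: "\<forall>z. a * z = z * a \<and> b * z = z * b \<and> c * z = z * c \<and> d * z = z * d"
    and d_inverse: "d * di = 1" "di * d = 1"
    and x_inverse: "x * X = 1" "X * x = 1"
    and y_inverse: "y * Y = 1" "Y * y = 1"
    and braid: "x * y * x = y * x * y"
    and x_quartic: "x ^ 4 = a * x ^ 3 + b * x ^ 2 + c * x + d"
    and y_quartic: "y ^ 4 = a * y ^ 3 + b * y ^ 2 + c * y + d"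
begin

abbreviation "R \<equiv> subring_gen {a, b, c, d, di}"

lemma R_mem [simp]: "a \<in> R" "b \<in> R" "c \<in> R" "d \<in> R" "di \<in> R" "1 \<in> R" "-1 \<in> R"
  by (auto intro: subring_gen.intros)

lemma R_mult: "r \<in> R \<Longrightarrow> r' \<in> R \<Longrightarrow> r * r' \<in> R"
  by (rule subring_gen.mult)

lemma di_central: "di * z = z * di"
proof -
  have "di * z = di * (z * d) * di" by (simp add: mult.assoc d_inverse)
  also have "\<dots> = di * (d * z) * di" using central by simp
  finally show ?thesis by (simp add: mult.assoc[symmetric] d_inverse)
qed

lemma R_central: "r \<in> R \<Longrightarrow> r * z = z * r"
proof (induction rule: subring_gen.induct)
  case (gen g)
  then show ?case using central di_central by auto
next
  case (mult p q)
  then show ?case by (metis mult.assoc)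
qed (simp_all add: distrib_left distrib_right)

lemma rsubmodule_mprod: "rsubmodule R (mprod R L)"
  unfolding mprod_def by (rule rsubmodule_rspan) (rule R_mult)

lemma rsubmodule_ualg: "rsubmodule R (ualg R s)"
  unfolding ualg_def by (rule rsubmodule_rspan) (rule R_mult)

context
  fixes s t :: 'a
  assumes inverse: "s * t = 1" "t * s = 1"
    and quartic: "s ^ 4 = a * s ^ 3 + b * s ^ 2 + c * s + d"
begin

lemma upow_recurrence:
  "w * upow s t (n + 4) * z = a * (w * upow s t (n + 3) * z) + b * (w * upow s t (n + 2) * z)
     + c * (w * upow s t (n + 1) * z) + d * (w * upow s t n * z)"
proof -
  have shift: "upow s t (n + int k) = upow s t n * s ^ k" for k
    using upow_add_nat[OF inverse] .
  have pull: "w * (p * (r * q)) * z = r * (w * (p * q) * z)" if "r \<in> {a, b, c, d}" for r p q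
  proof -
    have "w * r = r * w" "p * r = r * p" using that central by auto
    then show ?thesis by (metis mult.assoc)
  qed
  have "w * upow s t (n + 4) * z = w * (upow s t n * s ^ 4) * z" using shift[of 4] by simp
  also have "\<dots> = a * (w * (upow s t n * s ^ 3) * z) + b * (w * (upow s t n * s ^ 2) * z)
     + c * (w * (upow s t n * s) * z) + d * (w * upow s t n * z)"
    using pull[of a] pull[of b] pull[of c] pull[of d "upow s t n" 1]
    by (simp add: quartic distrib_left distrib_right)
  also have "\<dots> = a * (w * upow s t (n + 3) * z) + b * (w * upow s t (n + 2) * z)
     + c * (w * upow s t (n + 1) * z) + d * (w * upow s t n * z)"
    using shift[of 3] shift[of 2] shift[of 1] by simp
  finally show ?thesis .
qed

lemma upow_window:
  assumes "rsubmodule R M" "w * upow s t m * z \<in> M" "w * upow s t (m + 1) * z \<in> M"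
    "w * upow s t (m + 2) * z \<in> M" "w * upow s t (m + 3) * z \<in> M"
  shows "w * upow s t n * z \<in> M"
  using recurrence_in_rsubmodule[where g = "\<lambda>n. w * upow s t n * z", OF assms(1) _ _ _ _ _ _
      d_inverse(2) upow_recurrence assms(2-)] by simp

lemma upow_in_ualg: "upow s t n \<in> ualg R s"
proof -
  have "1 * s ^ k \<in> ualg R s" for k
    unfolding ualg_def by (rule rspan.smult) auto
  then have pow: "s ^ k \<in> ualg R s" for k by simp
  have "1 * upow s t n * 1 \<in> ualg R s"
    by (rule upow_window[OF rsubmodule_ualg, where m = 0])
      (use pow[of 0] pow[of 1] pow[of 2] pow[of 3] in \<open>simp_all add: power2_eq_square power3_eq_cube\<close>)
  then show ?thesis by simp
qed

lemma upow_mult_ualg: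
  assumes "z \<in> ualg R s"
  shows "upow s t j * z \<in> ualg R s"
proof -
  have "upow s t j * z * 1 \<in> rspan R {s ^ k | k. True}"
  proof (rule rspan_sandwich[OF rsubmodule_ualg[unfolded ualg_def]])
    show "r * upow s t j = upow s t j * r" if "r \<in> R" for r
      using R_central[OF that] .
    show "upow s t j * g * 1 \<in> rspan R {s ^ k | k. True}" if "g \<in> {s ^ k | k. True}" for g
      using that upow_in_ualg[of "j + int k" for k] by (auto simp: upow_add_nat[OF inverse] ualg_def)
  qed (use assms in \<open>simp add: ualg_def\<close>)
  then show ?thesis by (simp add: ualg_def)
qed

end

lemma inverse_cancel [simp]: "x * (X * z) = z" "X * (x * z) = z" "y * (Y * z) = z" "Y * (y * z) = z"
  by (simp_all add: mult.assoc[symmetric] x_inverse y_inverse)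

lemma xx_expansion: "x * x = a * x + b + c * X + d * (X * X)"
proof -
  have "x ^ 4 * (X * X) = x * x"
    by (simp add: numeral_eq_Suc mult.assoc x_inverse)
  moreover have "(a * x ^ 3 + b * x ^ 2 + c * x + d) * (X * X) = a * x + b + c * X + d * (X * X)"
    by (simp add: numeral_eq_Suc mult.assoc x_inverse distrib_right)
  ultimately show ?thesis using x_quartic by simp
qed

abbreviation "u1 \<equiv> ualg R x"
abbreviation "u2 \<equiv> ualg R y"

abbreviation "U' \<equiv> msum (msum (msum (mprod R [u1, u2, u1])
                    (mprod R [u1, {y * X * y}, u1]))
                    (mprod R [u1, {Y * x * Y}, u1]))
                    (mprod R [u1, {Y * X ^ 2 * Y}])"

abbreviation "U \<equiv> msum (msum U' (mprod R [u1, {y * X ^ 2 * y}, u1]))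
                    (mprod R [u1, {Y ^ 2 * X ^ 2 * Y ^ 2}, u1])"

lemma upow_x_in_u1 [simp]: "upow x X n \<in> u1"
  by (rule upow_in_ualg[OF x_inverse x_quartic])

lemma upow_y_in_u2 [simp]: "upow y Y n \<in> u2"
  by (rule upow_in_ualg[OF y_inverse y_quartic])

lemma u1_mem [simp]: "1 \<in> u1" "x \<in> u1" "X \<in> u1" "x * x \<in> u1" "X * X \<in> u1"
  using upow_x_in_u1[of 0] upow_x_in_u1[of 1] upow_x_in_u1[of "-1"] upow_x_in_u1[of 2]
    upow_x_in_u1[of "-2"] by simp_all

lemma u2_mem [simp]: "1 \<in> u2" "y \<in> u2" "Y \<in> u2" "y * y \<in> u2" "Y * Y \<in> u2"
  using upow_y_in_u2[of 0] upow_y_in_u2[of 1] upow_y_in_u2[of "-1"] upow_y_in_u2[of 2]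
    upow_y_in_u2[of "-2"] by simp_all

lemma rsubmodule_U: "rsubmodule R U"
  by (intro rsubmodule_msum rsubmodule_mprod)

lemma in_U_u1_u2_u1: "p \<in> u1 \<Longrightarrow> q \<in> u2 \<Longrightarrow> r \<in> u1 \<Longrightarrow> p * q * r \<in> U"
  and in_U_yXy: "p \<in> u1 \<Longrightarrow> r \<in> u1 \<Longrightarrow> p * (y * X * y) * r \<in> U"
  and in_U_YxY: "p \<in> u1 \<Longrightarrow> r \<in> u1 \<Longrightarrow> p * (Y * x * Y) * r \<in> U"
  and in_U_YXXY: "p \<in> u1 \<Longrightarrow> p * (Y * (X * X) * Y) \<in> U"
  and in_U_yXXy: "p \<in> u1 \<Longrightarrow> r \<in> u1 \<Longrightarrow> p * (y * (X * X) * y) * r \<in> U"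
  and in_U_YYXXYY: "p \<in> u1 \<Longrightarrow> r \<in> u1 \<Longrightarrow> p * (Y * Y * (X * X) * (Y * Y)) * r \<in> U"
  unfolding power2_eq_square
  by (intro msum_memI1 msum_memI2 mprod_memI2 mprod_memI3 rsubmodule_zero[OF rsubmodule_msum]
        rsubmodule_zero[OF rsubmodule_mprod] rsubmodule_mprod R_mem; simp)+

lemma u1_lmult: "z \<in> u1 \<Longrightarrow> upow x X j * z \<in> u1"
  by (rule upow_mult_ualg[OF x_inverse x_quartic])

lemma U_lmult:
  assumes "z \<in> U"
  shows "upow x X j * z \<in> U"
proof -
  let ?g = "upow x X j"
  have mprod: "?g * w \<in> mprod R (u1 # L)" if "w \<in> mprod R (u1 # L)" for w L
    using mprod_Cons_lmult[OF u1_lmult R_central[symmetric] that] .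
  have msum: "?g * w \<in> msum A B" if "w \<in> msum A B" "\<forall>w \<in> A. ?g * w \<in> A" "\<forall>w \<in> B. ?g * w \<in> B"
    for w A B
    using msum_lmult[of A ?g B] that by blast
  have "\<forall>w \<in> U. ?g * w \<in> U"
    by (intro ballI msum mprod) auto
  then show ?thesis using assms by blast
qed

text \<open>The braid relation and its conjugates, right-nested with and without a tail \<open>z\<close>, so that
\<open>simp\<close> together with \<open>mult.assoc\<close> can rewrite words with them.\<close>

lemma braid_yxy: "y * (x * (y * z)) = x * (y * (x * z))" "y * (x * y) = x * (y * x)"
  by (metis braid mult.assoc)+

lemma braid_yxY: "y * (x * (Y * z)) = X * (y * (x * z))" "y * (x * Y) = X * (y * x)"
proof -
  show "y * (x * (Y * z)) = X * (y * (x * z))" for z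
    by (metis inverse_cancel(2,3) braid_yxy(1))
  from this[of 1] show "y * (x * Y) = X * (y * x)" by simp
qed

lemma braid_Yxy: "Y * (x * (y * z)) = x * (y * (X * z))" "Y * (x * y) = x * (y * X)"
proof -
  show "Y * (x * (y * z)) = x * (y * (X * z))" for z
    by (metis inverse_cancel(1,4) braid_yxy(1))
  from this[of 1] show "Y * (x * y) = x * (y * X)" by simp
qed

lemma braid_YXY: "Y * (X * (Y * z)) = X * (Y * (X * z))" "Y * (X * Y) = X * (Y * X)"
proof -
  show "Y * (X * (Y * z)) = X * (Y * (X * z))" for z
    by (metis inverse_cancel braid_yxy(1))
  from this[of 1] show "Y * (X * Y) = X * (Y * X)" by simp
qed

lemma braid_YXy: "Y * (X * (y * z)) = x * (Y * (X * z))" "Y * (X * y) = x * (Y * X)"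
proof -
  show "Y * (X * (y * z)) = x * (Y * (X * z))" for z
    by (metis inverse_cancel braid_Yxy(1))
  from this[of 1] show "Y * (X * y) = x * (Y * X)" by simp
qed

lemma braid_yXY: "y * (X * (Y * z)) = X * (Y * (x * z))" "y * (X * Y) = X * (Y * x)"
proof -
  show "y * (X * (Y * z)) = X * (Y * (x * z))" for z
    by (metis inverse_cancel braid_yxY(1))
  from this[of 1] show "y * (X * Y) = X * (Y * x)" by simp
qed

lemma left_y_window_Y:
  assumes "Y * (p * q) \<in> U" "p * q \<in> U" "y * (p * q) \<in> U" "y * y * (p * q) \<in> U"
  shows "upow y Y k * p * q \<in> U"
  using upow_window[OF y_inverse y_quartic rsubmodule_U, of 1 "-1" "p * q" k] assms
  by (simp add: mult.assoc)

lemma left_y_window_YY: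
  assumes "Y * Y * (p * q) \<in> U" "Y * (p * q) \<in> U" "p * q \<in> U" "y * (p * q) \<in> U"
  shows "upow y Y k * p * q \<in> U"
  using upow_window[OF y_inverse y_quartic rsubmodule_U, of 1 "-2" "p * q" k] assms
  by (simp add: mult.assoc)

lemma right_y_window_Y:
  assumes "w * Y \<in> U" "w \<in> U" "w * y \<in> U" "w * (y * y) \<in> U"
  shows "w * upow y Y m \<in> U"
  using upow_window[OF y_inverse y_quartic rsubmodule_U, of w "-1" 1 m] assms by simp

lemma right_y_window_YY:
  assumes "w * (Y * Y) \<in> U" "w * Y \<in> U" "w \<in> U" "w * y \<in> U"
  shows "w * upow y Y m \<in> U"
  using upow_window[OF y_inverse y_quartic rsubmodule_U, of w "-2" 1 m] assms by simp

lemma ypow_ypow_in_U: "upow y Y k * upow y Y m \<in> U"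
  using in_U_u1_u2_u1[OF u1_mem(1) upow_y_in_u2[of "k + m"] u1_mem(1)]
  by (simp add: upow_add[OF y_inverse])

lemma ypow_u1_in_U: "p \<in> u1 \<Longrightarrow> upow y Y k * p \<in> U"
  using in_U_u1_u2_u1[of 1 "upow y Y k" p] by simp

lemma ypow_x_ypow_in_U: "upow y Y k * x * upow y Y m \<in> U"
proof (rule right_y_window_Y)
  show "upow y Y k * x * Y \<in> U"
  proof (rule left_y_window_Y)
    show "Y * (x * Y) \<in> U" using in_U_YxY[of 1 1] by (simp add: mult.assoc)
    show "x * Y \<in> U" using in_U_u1_u2_u1[of x Y 1] by simp
    show "y * (x * Y) \<in> U" using in_U_u1_u2_u1[of X y x] by (simp add: mult.assoc braid_yxY)
    show "y * y * (x * Y) \<in> U" using in_U_yXy[of 1 x] by (simp add: mult.assoc braid_yxY)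
  qed
  show "upow y Y k * x \<in> U" using ypow_u1_in_U by simp
  show "upow y Y k * x * y \<in> U"
  proof (rule left_y_window_Y)
    show "Y * (x * y) \<in> U" using in_U_u1_u2_u1[of x y X] by (simp add: mult.assoc braid_Yxy)
    show "x * y \<in> U" using in_U_u1_u2_u1[of x y 1] by simp
    show "y * (x * y) \<in> U" using in_U_u1_u2_u1[of x y x] by (simp add: mult.assoc braid_yxy)
    show "y * y * (x * y) \<in> U" using in_U_u1_u2_u1[of x y "x * x"] by (simp add: mult.assoc braid_yxy)
  qed
  show "upow y Y k * x * (y * y) \<in> U"
  proof (rule left_y_window_YY)
    show "Y * Y * (x * (y * y)) \<in> U" using in_U_yXXy[of x 1] by (simp add: mult.assoc braid_Yxy)
    show "Y * (x * (y * y)) \<in> U" using in_U_yXy[of x 1] by (simp add: mult.assoc braid_Yxy)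
    show "x * (y * y) \<in> U" using in_U_u1_u2_u1[of x "y * y" 1] by simp
    show "y * (x * (y * y)) \<in> U" using in_U_u1_u2_u1[of "x * x" y x] by (simp add: mult.assoc braid_yxy)
  qed
qed

lemma ypow_X_ypow_in_U: "upow y Y k * X * upow y Y m \<in> U"
proof (rule right_y_window_YY)
  show "upow y Y k * X * (Y * Y) \<in> U"
  proof (rule left_y_window_YY)
    show "Y * Y * (X * (Y * Y)) \<in> U" using in_U_YXXY[of X] by (simp add: mult.assoc braid_YXY(1))
    show "Y * (X * (Y * Y)) \<in> U" using in_U_u1_u2_u1[of "X * X" Y X] by (simp add: mult.assoc braid_YXY)
    show "X * (Y * Y) \<in> U" using in_U_u1_u2_u1[of X "Y * Y" 1] by simp
    show "y * (X * (Y * Y)) \<in> U" using in_U_YxY[of X 1] by (simp add: mult.assoc braid_yXY)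
  qed
  show "upow y Y k * X * Y \<in> U"
  proof (rule left_y_window_Y)
    show "Y * (X * Y) \<in> U" using in_U_u1_u2_u1[of X Y X] by (simp add: mult.assoc braid_YXY)
    show "X * Y \<in> U" using in_U_u1_u2_u1[of X Y 1] by simp
    show "y * (X * Y) \<in> U" using in_U_u1_u2_u1[of X Y x] by (simp add: mult.assoc braid_yXY)
    show "y * y * (X * Y) \<in> U" using in_U_u1_u2_u1[of X Y "x * x"] by (simp add: mult.assoc braid_yXY)
  qed
  show "upow y Y k * X \<in> U" using ypow_u1_in_U by simp
  show "upow y Y k * X * y \<in> U"
  proof (rule left_y_window_YY)
    show "Y * Y * (X * y) \<in> U" using in_U_YxY[of 1 X] by (simp add: mult.assoc braid_YXy)
    show "Y * (X * y) \<in> U" using in_U_u1_u2_u1[of x Y X] by (simp add: mult.assoc braid_YXy)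
    show "X * y \<in> U" using in_U_u1_u2_u1[of X y 1] by simp
    show "y * (X * y) \<in> U" using in_U_yXy[of 1 1] by (simp add: mult.assoc)
  qed
qed

lemma xx_in_U_if_XX_in_U:
  assumes "w * x * z \<in> U" "w * z \<in> U" "w * X * z \<in> U" "w * (X * X) * z \<in> U"
  shows "w * (x * x) * z \<in> U"
proof -
  have pull: "w * (r * v) * z = r * (w * v * z)" if "r \<in> R" for r v
    using R_central[OF that] by (metis mult.assoc)
  have "w * (x * x) * z = a * (w * x * z) + b * (w * z) + c * (w * X * z) + d * (w * (X * X) * z)"
    unfolding xx_expansion using pull[of a x] pull[of b 1] pull[of c X] pull[of d "X * X"]
    by (simp add: distrib_left distrib_right)
  also have "\<dots> \<in> U"
    by (rule rsubmodule_lincomb4[OF rsubmodule_U R_mem(1-4) assms])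
  finally show ?thesis .
qed

lemma ypow_xx_ypow_in_U_if_XX:
  "upow y Y k * (X * X) * upow y Y m \<in> U \<Longrightarrow> upow y Y k * (x * x) * upow y Y m \<in> U"
  by (rule xx_in_U_if_XX_in_U[OF ypow_x_ypow_in_U ypow_ypow_in_U ypow_X_ypow_in_U])

lemma ypow_xx_YY_in_U: "upow y Y k * (x * x) * (Y * Y) \<in> U"
proof (rule left_y_window_YY)
  show "Y * Y * (x * x * (Y * Y)) \<in> U"
    using ypow_xx_ypow_in_U_if_XX[of "-2" "-2"] in_U_YYXXYY[of 1 1] by (simp add: mult.assoc)
  show "Y * (x * x * (Y * Y)) \<in> U"
  proof -
    have "Y * (x * x * (Y * Y)) = x * (y * y * X * (Y * Y * Y))"
      by (metis braid_Yxy(1) inverse_cancel mult.assoc mult_1_right)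
    then show ?thesis using U_lmult[OF ypow_X_ypow_in_U[of 2 "-3"], of 1] by simp
  qed
  show "x * x * (Y * Y) \<in> U" using in_U_u1_u2_u1[of "x * x" "Y * Y" 1] by simp
  show "y * (x * x * (Y * Y)) \<in> U"
  proof -
    have "y * (x * x * (Y * Y)) = X * (y * X * y) * x"
      by (metis braid_yxY(1) inverse_cancel mult.assoc mult_1_right)
    then show ?thesis using in_U_yXy[of X x] by simp
  qed
qed

lemma ypow_xx_Y_in_U: "upow y Y k * (x * x) * Y \<in> U"
proof (rule left_y_window_Y)
  show "Y * (x * x * Y) \<in> U"
    using ypow_xx_ypow_in_U_if_XX[of "-1" "-1"] in_U_YXXY[of 1] by (simp add: mult.assoc)
  show "x * x * Y \<in> U" using in_U_u1_u2_u1[of "x * x" Y 1] by simp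
  show "y * (x * x * Y) \<in> U"
  proof -
    have "y * (x * x * Y) = X * (y * y) * x"
      by (metis braid_yxY(1) inverse_cancel mult.assoc mult_1_right)
    then show ?thesis using in_U_u1_u2_u1[of X "y * y" x] by simp
  qed
  show "y * y * (x * x * Y) \<in> U"
  proof -
    have "y * y * (X * X) * Y = X * (Y * x * Y) * x"
      by (metis braid_yXY(1) inverse_cancel mult.assoc mult_1_right)
    then show ?thesis
      using ypow_xx_ypow_in_U_if_XX[of 2 "-1"] in_U_YxY[of X x] by (simp add: mult.assoc)
  qed
qed

lemma ypow_xx_y_in_U: "upow y Y k * (x * x) * y \<in> U"
proof (rule left_y_window_YY)
  show "Y * Y * (x * x * y) \<in> U"
  proof -
    have "Y * Y * (x * x * y) = x * (y * X * y) * X"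
      by (metis braid_Yxy(1) inverse_cancel mult.assoc mult_1_right)
    then show ?thesis using in_U_yXy[of x X] by simp
  qed
  show "Y * (x * x * y) \<in> U"
  proof -
    have "Y * (x * x * y) = x * (y * y) * X"
      by (metis braid_Yxy(1) inverse_cancel mult.assoc mult_1_right)
    then show ?thesis using in_U_u1_u2_u1[of x "y * y" X] by simp
  qed
  show "x * x * y \<in> U" using in_U_u1_u2_u1[of "x * x" y 1] by simp
  show "y * (x * x * y) \<in> U"
    using ypow_xx_ypow_in_U_if_XX[of 1 1] in_U_yXXy[of 1 1] by (simp add: mult.assoc)
qed

lemma ypow_xx_ypow_in_U: "upow y Y k * (x * x) * upow y Y m \<in> U"
  by (rule right_y_window_YY) (use ypow_xx_YY_in_U ypow_xx_Y_in_U ypow_u1_in_U ypow_xx_y_in_U in simp_all)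

lemma ypow_xpow_ypow_in_U: "upow y Y k * upow x X l * upow y Y m \<in> U"
  using upow_window[OF x_inverse x_quartic rsubmodule_U, of "upow y Y k" "-1" "upow y Y m" l]
    ypow_X_ypow_in_U ypow_ypow_in_U ypow_x_ypow_in_U ypow_xx_ypow_in_U by simp

lemma u2_u1_u2_subset_U: "mprod R [u2, u1, u2] \<subseteq> U"
proof -
  have sandwich: "w * p * z \<in> U"
    if "p \<in> ualg R s" "\<And>k. w * s ^ k * z \<in> U" for w p z s
  proof (rule rspan_sandwich[OF rsubmodule_U, where X = "{s ^ k | k. True}"])
    show "p \<in> rspan R {s ^ k | k. True}" using that(1) by (simp add: ualg_def)
  qed (use that(2) R_central in auto)
  have "y ^ i * x ^ j * y ^ k * 1 \<in> U" for i j k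
    using ypow_xpow_ypow_in_U[of "int i" "int j" "int k"] by simp
  then have "y ^ i * x ^ j * r * 1 \<in> U" if "r \<in> u2" for i j r
    by (rule sandwich[OF that])
  then have "y ^ i * q * r \<in> U" if "q \<in> u1" "r \<in> u2" for i q r
    using that by (intro sandwich[OF that(1)]) simp
  then have "1 * p * (q * r) \<in> U" if "p \<in> u2" "q \<in> u1" "r \<in> u2" for p q r
    using that by (intro sandwich[OF that(1)]) (simp add: mult.assoc)
  then have "prods [u2, u1, u2] \<subseteq> U" by auto
  then show ?thesis by (rule mprod_subset[OF rsubmodule_U])
qed

end

theorem proposition3p2:
  fixes a b c d di s1 s2 t1 t2 :: "'a::ring_1"
  assumes central: "\<forall>x. a * x = x * a \<and> b * x = x * b \<and> c * x = x * c \<and> d * x = x * d"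
    and d_inv: "d * di = 1" "di * d = 1"
    and s1_inv: "s1 * t1 = 1" "t1 * s1 = 1"
    and s2_inv: "s2 * t2 = 1" "t2 * s2 = 1"
    and braid: "s1 * s2 * s1 = s2 * s1 * s2"
    and quart1: "s1 ^ 4 = a * s1 ^ 3 + b * s1 ^ 2 + c * s1 + d"
    and quart2: "s2 ^ 4 = a * s2 ^ 3 + b * s2 ^ 2 + c * s2 + d"
  defines "R \<equiv> subring_gen {a, b, c, d, di}"
  defines "u1 \<equiv> ualg R s1" and "u2 \<equiv> ualg R s2"
  defines "U' \<equiv> msum (msum (msum (mprod R [u1, u2, u1])
                    (mprod R [u1, {s2 * t1 * s2}, u1]))
                    (mprod R [u1, {t2 * s1 * t2}, u1]))
                    (mprod R [u1, {t2 * t1 ^ 2 * t2}])"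
  defines "U \<equiv> msum (msum U' (mprod R [u1, {s2 * t1 ^ 2 * s2}, u1]))
                    (mprod R [u1, {t2 ^ 2 * t1 ^ 2 * t2 ^ 2}, u1])"
  shows "mprod R [u2, u1, u2] \<subseteq> U"
proof -
  interpret H4_rep a b c d di s1 s2 t1 t2
    by unfold_locales (fact central d_inv s1_inv s2_inv braid quart1 quart2)+
  show ?thesis
    unfolding R_def u1_def u2_def U'_def U_def by (rule u2_u1_u2_subset_U)
qed

end
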